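(* Let $m$ be a positive integer and $\mathcal{N}_r$ the gadget of size $m$. Every $\mathcal{H}^{(\ast)}$-partition of $\mathcal{N}_r$ has size at least $m+1$. Moreover, there exist exactly two $\mathcal{H}^{(m+1)}$-partitions of $\mathcal{N}_r$, namely $\mathcal{L}_r=\{\{r_{i,0},r_{i,1},\dots,r_{i,m}\}:0\le i\le m\}$ and $\mathcal{R}_r=\{\{r_{0,i},r_{1,i},\dots,r_{m,i}\}:0\le i\le m\}$.
   Context: The gadget $\mathcal{N}_r=\langle\mathcal{V}_r,\mathcal{E}_r\rangle$ of size $m$ has vertex set $\mathcal{V}_r=\{r_{i,j}:0\le i,j\le m\}$ and arc set $\mathcal{E}_r=\{\langle r_{i,j},r_{i,j+1}\rangle:0\le i\le m,\ 0\le j<m\}\cup\{\langle r_{i,j},r_{i+1,j}\rangle:0\le i<m,\ 0\le j\le m\}$; it is a DAG. For a DAG $G$, a partition $\pi$ of its vertex set is an $\mathcal{H}^{(k)}$-partition if $|\pi|=k$, every induced subgraph $G[P]$, $P\in\pi$, has a directed Hamiltonian path, and the quotient digraph $G/\pi$ (vertex set $\pi$, arc $\langle P,Q\rangle$ for $P\ne Q$ whenever some arc of $G$ goes from $P$ to $Q$) is acyclic; an $\mathcal{H}^{(\ast)}$-partition is an $\mathcal{H}^{(k)}$-partition for some $k$. *)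

theory Defs
  imports Main "HOL-Library.Disjoint_Sets"
begin

definition gadget_V :: "nat \<Rightarrow> (nat \<times> nat) set" where
  "gadget_V m = {0..m} \<times> {0..m}"

definition gadget_E :: "nat \<Rightarrow> ((nat \<times> nat) \<times> (nat \<times> nat)) set" where
  "gadget_E m = {((i, j), (i, j + 1)) | i j. i \<le> m \<and> j < m}
              \<union> {((i, j), (i + 1, j)) | i j. i < m \<and> j \<le> m}"

definition has_ham_path :: "('a \<times> 'a) set \<Rightarrow> 'a set \<Rightarrow> bool" where
  "has_ham_path E P \<longleftrightarrow> (\<exists>xs. xs \<noteq> [] \<and> distinct xs \<and> set xs = P \<and>
      (\<forall>k. Suc k < length xs \<longrightarrow> (xs ! k, xs ! Suc k) \<in> E))"

definition quotient_arcs :: "('a \<times> 'a) set \<Rightarrow> 'a set set \<Rightarrow> ('a set \<times> 'a set) set" where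
  "quotient_arcs E \<pi> = {(P, Q). P \<in> \<pi> \<and> Q \<in> \<pi> \<and> P \<noteq> Q \<and> (\<exists>u\<in>P. \<exists>v\<in>Q. (u, v) \<in> E)}"

definition H_partition :: "'a set \<Rightarrow> ('a \<times> 'a) set \<Rightarrow> nat \<Rightarrow> 'a set set \<Rightarrow> bool" where
  "H_partition V E k \<pi> \<longleftrightarrow> partition_on V \<pi> \<and> finite \<pi> \<and> card \<pi> = k \<and>
     (\<forall>P\<in>\<pi>. has_ham_path E P) \<and> acyclic (quotient_arcs E \<pi>)"

definition H_star_partition :: "'a set \<Rightarrow> ('a \<times> 'a) set \<Rightarrow> 'a set set \<Rightarrow> bool" where
  "H_star_partition V E \<pi> \<longleftrightarrow> (\<exists>k. H_partition V E k \<pi>)"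

definition gadget_L :: "nat \<Rightarrow> (nat \<times> nat) set set" where
  "gadget_L m = {{(i, j) | j. j \<le> m} | i. i \<le> m}"

definition gadget_R :: "nat \<Rightarrow> (nat \<times> nat) set set" where
  "gadget_R m = {{(j, i) | j. j \<le> m} | i. i \<le> m}"

end

theory Submission
  imports Defs
begin

text \<open>Every arc of the gadget raises the rank \<open>i + j\<close> by one, so a Hamiltonian path of a
block visits each rank at most once. If it turned at a vertex \<open>b\<close>, the opposite corner of
that unit square would have the rank of \<open>b\<close>, hence lie in another block that is entered from
the block and leads back into it: a 2-cycle of the quotient. So every block lies in a row or a
column and has at most \<open>m + 1\<close> vertices, which forces at least \<open>m + 1\<close> blocks. With exactly
\<open>m + 1\<close> blocks, all of them are full rows or full columns, and as every row meets every
column they are all of the same kind.\<close>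

definition is_walk :: "('a \<times> 'a) set \<Rightarrow> 'a list \<Rightarrow> bool" where
  "is_walk E xs \<longleftrightarrow> (\<forall>k. Suc k < length xs \<longrightarrow> (xs ! k, xs ! Suc k) \<in> E)"

lemma has_ham_path_iff_walk:
  "has_ham_path E P \<longleftrightarrow> (\<exists>xs. xs \<noteq> [] \<and> distinct xs \<and> set xs = P \<and> is_walk E xs)"
  by (simp add: has_ham_path_def is_walk_def)

lemma partition_on_subset_eq:
  assumes "partition_on V \<pi>" "partition_on V \<sigma>" "\<pi> \<subseteq> \<sigma>"
  shows "\<pi> = \<sigma>"
proof
  show "\<sigma> \<subseteq> \<pi>"
  proof
    fix B assume B: "B \<in> \<sigma>"
    then obtain x where x: "x \<in> B" using partition_onD3[OF assms(2)] by (metis ex_in_conv)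
    then obtain C where C: "C \<in> \<pi>" "x \<in> C"
      using B partition_onD1[OF assms(1)] partition_onD1[OF assms(2)] by blast
    have "C = B"
      using disjointD[OF partition_onD2[OF assms(2)]] C B x assms(3) by blast
    then show "B \<in> \<pi>" using C by simp
  qed
qed fact

lemma H_partition_block_convex:
  assumes H: "H_partition V E k \<pi>" and P: "P \<in> \<pi>" "u \<in> P" "v \<in> P"
    and arcs: "(u, w) \<in> E" "(w, v) \<in> E" and w: "w \<in> V"
  shows "w \<in> P"
proof (rule ccontr)
  assume "w \<notin> P"
  obtain Q where Q: "Q \<in> \<pi>" "w \<in> Q"
    using H w by (auto simp: H_partition_def dest: partition_onD1)
  with \<open>w \<notin> P\<close> have "(P, Q) \<in> quotient_arcs E \<pi>" "(Q, P) \<in> quotient_arcs E \<pi>"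
    using P arcs unfolding quotient_arcs_def by blast+
  then have "(P, P) \<in> (quotient_arcs E \<pi>)\<^sup>+" by auto
  then show False using H by (auto simp: H_partition_def acyclic_def)
qed

lemma H_partition_of_lines:
  fixes pt :: "nat \<Rightarrow> nat \<Rightarrow> 'a"
  assumes inj: "inj_on (case_prod pt) ({0..n} \<times> {0..l})"
    and V: "V = case_prod pt ` ({0..n} \<times> {0..l})"
    and along: "\<And>a j. a \<le> n \<Longrightarrow> j < l \<Longrightarrow> (pt a j, pt a (Suc j)) \<in> E"
    and forward: "\<And>a b j k. a \<le> n \<Longrightarrow> b \<le> n \<Longrightarrow> j \<le> l \<Longrightarrow> k \<le> l \<Longrightarrow>
                    (pt a j, pt b k) \<in> E \<Longrightarrow> a \<le> b"
  shows "H_partition V E (Suc n) ((\<lambda>a. pt a ` {0..l}) ` {0..n})"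
proof -
  define line where "line a = pt a ` {0..l}" for a
  have pt_eq: "pt a j = pt b k \<longleftrightarrow> a = b \<and> j = k"
    if "a \<le> n" "b \<le> n" "j \<le> l" "k \<le> l" for a b j k
    using inj_onD[OF inj, of "(a, j)" "(b, k)"] that by auto
  have line_eq: "line a = line b \<longleftrightarrow> a = b" if "a \<le> n" "b \<le> n" for a b
    using that pt_eq unfolding line_def by (fastforce simp: set_eq_iff)
  have "partition_on V (line ` {0..n})"
    by (rule partition_onI) (auto simp: V line_def disjnt_def pt_eq)
  moreover have "card (line ` {0..n}) = Suc n"
    using line_eq by (subst card_image) (auto simp: inj_on_def)
  moreover have "has_ham_path E (line a)" if "a \<le> n" for a
    unfolding has_ham_path_def
    by (rule exI[of _ "map (pt a) [0..<Suc l]"])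
       (auto simp: that line_def distinct_map inj_on_def pt_eq along simp del: upt_Suc)
  moreover have "acyclic (quotient_arcs E (line ` {0..n}))"
  proof -
    define idx where "idx = the_inv_into {0..n} line"
    have idx_line: "idx (line a) = a" if "a \<le> n" for a
      unfolding idx_def using that line_eq by (intro the_inv_into_f_f) (auto simp: inj_on_def)
    have "idx P < idx Q" if "(P, Q) \<in> quotient_arcs E (line ` {0..n})" for P Q
    proof -
      have PQ: "P \<in> line ` {0..n}" "Q \<in> line ` {0..n}" "P \<noteq> Q"
        and arc: "\<exists>u\<in>P. \<exists>v\<in>Q. (u, v) \<in> E"
        using that unfolding quotient_arcs_def by simp_all
      from PQ(1,2) arc obtain a b u v where ab: "a \<le> n" "b \<le> n" "P = line a" "Q = line b"
          and uv: "u \<in> P" "v \<in> Q" "(u, v) \<in> E"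
        by auto
      from uv ab obtain j k where "j \<le> l" "k \<le> l" "(pt a j, pt b k) \<in> E"
        unfolding line_def by auto
      moreover have "a \<noteq> b" using ab PQ(3) by blast
      ultimately have "a < b" using ab forward by fastforce
      with ab show ?thesis by (simp add: idx_line)
    qed
    then show ?thesis
      by (subst acyclic_converse[symmetric]) (rule acyclicI_order[where f = idx], auto)
  qed
  ultimately show ?thesis
    unfolding H_partition_def line_def by auto
qed

lemma gadget_E_step:
  "(u, v) \<in> gadget_E m \<Longrightarrow> v = (fst u, Suc (snd u)) \<or> v = (Suc (fst u), snd u)"
  by (auto simp: gadget_E_def)

lemma gadget_E_in_V: "(u, v) \<in> gadget_E m \<Longrightarrow> u \<in> gadget_V m \<and> v \<in> gadget_V m"
  by (auto simp: gadget_E_def gadget_V_def)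

lemma card_gadget_V: "card (gadget_V m) = Suc m * Suc m"
  by (simp add: gadget_V_def card_cartesian_product)

lemma gadget_L_eq: "gadget_L m = (\<lambda>a. {a} \<times> {0..m}) ` {0..m}"
  unfolding gadget_L_def by auto

lemma gadget_R_eq: "gadget_R m = (\<lambda>b. {0..m} \<times> {b}) ` {0..m}"
  unfolding gadget_R_def by auto

lemma gadget_line_card:
  "L \<in> gadget_L m \<union> gadget_R m \<Longrightarrow> finite L \<and> card L = Suc m"
  by (auto simp: gadget_L_eq gadget_R_eq card_cartesian_product)

lemma gadget_walk_rank:
  assumes "is_walk (gadget_E m) xs" "k < length xs"
  shows "fst (xs ! k) + snd (xs ! k) = fst (xs ! 0) + snd (xs ! 0) + k"
  using assms(2)
proof (induction k)
  case (Suc k)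
  then have "(xs ! k, xs ! Suc k) \<in> gadget_E m" using assms(1) by (simp add: is_walk_def)
  with Suc show ?case by (auto dest: gadget_E_step)
qed simp

lemma gadget_walk_rank_inj:
  assumes "is_walk (gadget_E m) xs" "x \<in> set xs" "y \<in> set xs"
    and "fst x + snd x = fst y + snd y"
  shows "x = y"
proof -
  obtain i j where "i < length xs" "x = xs ! i" "j < length xs" "y = xs ! j"
    using assms(2,3) by (metis in_set_conv_nth)
  with assms(1,4) gadget_walk_rank[of m xs] show ?thesis by auto
qed

lemma gadget_turn_square:
  assumes ab: "(a, b) \<in> gadget_E m" and bc: "(b, c) \<in> gadget_E m"
    and turn: "(fst b = fst a) \<noteq> (fst c = fst b)"
  obtains w where "(a, w) \<in> gadget_E m" "(w, c) \<in> gadget_E m" "w \<noteq> b"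
    "fst w + snd w = fst b + snd b"
proof -
  have c: "c = (Suc (fst a), Suc (snd a))"
    using gadget_E_step[OF ab] gadget_E_step[OF bc] turn by auto
  then have bounds: "Suc (fst a) \<le> m" "Suc (snd a) \<le> m"
    using gadget_E_in_V[OF bc] by (auto simp: gadget_V_def)
  from gadget_E_step[OF ab] show ?thesis
  proof
    assume "b = (fst a, Suc (snd a))"
    with bounds c show ?thesis
      by (intro that[of "(Suc (fst a), snd a)"]) (auto simp: gadget_E_def prod_eq_iff)
  next
    assume "b = (Suc (fst a), snd a)"
    with bounds c show ?thesis
      by (intro that[of "(fst a, Suc (snd a))"]) (auto simp: gadget_E_def prod_eq_iff)
  qed
qed

lemma gadget_block_walk_no_turn:
  assumes H: "H_partition (gadget_V m) (gadget_E m) n \<pi>" and P: "P \<in> \<pi>"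
    and xs: "set xs = P" "is_walk (gadget_E m) xs" and k: "Suc (Suc k) < length xs"
  shows "(fst (xs ! Suc k) = fst (xs ! k)) = (fst (xs ! Suc (Suc k)) = fst (xs ! Suc k))"
proof (rule ccontr)
  let ?a = "xs ! k" and ?b = "xs ! Suc k" and ?c = "xs ! Suc (Suc k)"
  assume turn: "\<not> ?thesis"
  have ab: "(?a, ?b) \<in> gadget_E m" and bc: "(?b, ?c) \<in> gadget_E m"
    using xs(2) k by (auto simp: is_walk_def)
  obtain w where aw: "(?a, w) \<in> gadget_E m" and wc: "(w, ?c) \<in> gadget_E m"
    and "w \<noteq> ?b" and rank: "fst w + snd w = fst ?b + snd ?b"
    using gadget_turn_square[OF ab bc] turn by blast
  have "w \<in> P"
    using H_partition_block_convex[OF H P _ _ aw wc] gadget_E_in_V[OF wc] xs(1) k by auto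
  then have "w = ?b"
    using gadget_walk_rank_inj[OF xs(2) _ _ rank] xs(1) k by auto
  with \<open>w \<noteq> ?b\<close> show False ..
qed

lemma gadget_walk_straight:
  assumes walk: "is_walk (gadget_E m) xs"
    and no_turn: "\<And>k. Suc (Suc k) < length xs \<Longrightarrow>
      (fst (xs ! Suc k) = fst (xs ! k)) = (fst (xs ! Suc (Suc k)) = fst (xs ! Suc k))"
  shows "(\<forall>x\<in>set xs. fst x = fst (xs ! 0)) \<or> (\<forall>x\<in>set xs. snd x = snd (xs ! 0))"
proof -
  define horizontal where "horizontal = (fst (xs ! 1) = fst (xs ! 0))"
  have same_dir: "(fst (xs ! Suc k) = fst (xs ! k)) = horizontal" if "Suc k < length xs" for k
    using that by (induction k) (auto simp: horizontal_def no_turn)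
  show ?thesis
  proof (cases horizontal)
    case True
    have "fst (xs ! l) = fst (xs ! 0)" if "l < length xs" for l
      using that same_dir True by (induction l) auto
    then have "\<forall>x\<in>set xs. fst x = fst (xs ! 0)" by (metis in_set_conv_nth)
    then show ?thesis ..
  next
    case False
    have "snd (xs ! l) = snd (xs ! 0)" if "l < length xs" for l
      using that
    proof (induction l)
      case (Suc l)
      then have "(xs ! l, xs ! Suc l) \<in> gadget_E m" "fst (xs ! Suc l) \<noteq> fst (xs ! l)"
        using walk same_dir False by (auto simp: is_walk_def)
      with Suc show ?case by (auto dest: gadget_E_step)
    qed simp
    then have "\<forall>x\<in>set xs. snd x = snd (xs ! 0)" by (metis in_set_conv_nth)
    then show ?thesis ..
  qed
qed

lemma gadget_block_in_line:
  assumes H: "H_partition (gadget_V m) (gadget_E m) n \<pi>" and P: "P \<in> \<pi>"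
  shows "\<exists>L \<in> gadget_L m \<union> gadget_R m. P \<subseteq> L"
proof -
  obtain xs where xs: "xs \<noteq> []" "set xs = P" "is_walk (gadget_E m) xs"
    using H P by (auto simp: H_partition_def has_ham_path_iff_walk)
  have PV: "P \<subseteq> gadget_V m" and x0: "xs ! 0 \<in> P"
    using H P xs by (auto simp: H_partition_def dest: partition_onD1)
  from gadget_walk_straight[OF xs(3) gadget_block_walk_no_turn[OF H P xs(2,3)]]
  show ?thesis
  proof
    assume "\<forall>x\<in>set xs. fst x = fst (xs ! 0)"
    with xs(2) have "P \<subseteq> {fst (xs ! 0)} \<times> {0..m}"
      using PV by (auto simp: gadget_V_def mem_Times_iff)
    moreover have "fst (xs ! 0) \<le> m" using PV x0 by (auto simp: gadget_V_def)
    ultimately show ?thesis by (intro bexI[of _ "{fst (xs ! 0)} \<times> {0..m}"]) (auto simp: gadget_L_eq)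
  next
    assume "\<forall>x\<in>set xs. snd x = snd (xs ! 0)"
    with xs(2) have "P \<subseteq> {0..m} \<times> {snd (xs ! 0)}"
      using PV by (auto simp: gadget_V_def mem_Times_iff)
    moreover have "snd (xs ! 0) \<le> m" using PV x0 by (auto simp: gadget_V_def)
    ultimately show ?thesis by (intro bexI[of _ "{0..m} \<times> {snd (xs ! 0)}"]) (auto simp: gadget_R_eq)
  qed
qed

lemma gadget_block_card_le:
  assumes "H_partition (gadget_V m) (gadget_E m) n \<pi>" "P \<in> \<pi>"
  shows "card P \<le> Suc m"
proof -
  obtain L where "L \<in> gadget_L m \<union> gadget_R m" "P \<subseteq> L"
    using gadget_block_in_line[OF assms] ..
  then show ?thesis using card_mono[of L P] gadget_line_card[of L m] by simp
qed

lemma gadget_sum_card_blocks: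
  assumes "H_partition (gadget_V m) (gadget_E m) n \<pi>"
  shows "(\<Sum>P\<in>\<pi>. card P) = Suc m * Suc m"
proof -
  have part: "partition_on (gadget_V m) \<pi>" using assms by (simp add: H_partition_def)
  have "finite (gadget_V m)" by (simp add: gadget_V_def)
  then have "finite P" if "P \<in> \<pi>" for P
    using that partition_onD1[OF part] by (metis Union_upper finite_subset)
  with product_partition[OF part] show ?thesis by (simp add: card_gadget_V)
qed

lemma gadget_H_partition_card_ge:
  assumes H: "H_partition (gadget_V m) (gadget_E m) n \<pi>"
  shows "Suc m \<le> card \<pi>"
proof -
  have "Suc m * Suc m = (\<Sum>P\<in>\<pi>. card P)" using gadget_sum_card_blocks[OF H] ..
  also have "\<dots> \<le> (\<Sum>P\<in>\<pi>. Suc m)" using gadget_block_card_le[OF H] by (rule sum_mono)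
  also have "\<dots> = card \<pi> * Suc m" by simp
  finally show ?thesis by (metis mult_le_cancel2 zero_less_Suc)
qed

lemma gadget_min_H_partition_blocks_are_lines:
  assumes H: "H_partition (gadget_V m) (gadget_E m) (Suc m) \<pi>" and P: "P \<in> \<pi>"
  shows "P \<in> gadget_L m \<union> gadget_R m"
proof -
  have "card P = Suc m"
  proof (rule ccontr)
    assume "card P \<noteq> Suc m"
    with gadget_block_card_le[OF H P] have "card P < Suc m" by simp
    with P gadget_block_card_le[OF H] have "(\<Sum>P\<in>\<pi>. card P) < (\<Sum>P\<in>\<pi>. Suc m)"
      using H by (intro sum_strict_mono_ex1) (auto simp: H_partition_def)
    with gadget_sum_card_blocks[OF H] H show False by (simp add: H_partition_def)
  qed
  moreover obtain L where "L \<in> gadget_L m \<union> gadget_R m" "P \<subseteq> L"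
    using gadget_block_in_line[OF H P] ..
  ultimately show ?thesis
    using card_subset_eq[of L P] gadget_line_card[of L m] by simp
qed

lemma gadget_L_H_partition: "H_partition (gadget_V m) (gadget_E m) (Suc m) (gadget_L m)"
proof -
  have "H_partition (gadget_V m) (gadget_E m) (Suc m) ((\<lambda>a. Pair a ` {0..m}) ` {0..m})"
    by (rule H_partition_of_lines) (auto simp: gadget_V_def gadget_E_def)
  moreover have "Pair a ` A = {a} \<times> A" for a :: nat and A :: "nat set" by auto
  ultimately show ?thesis by (simp add: gadget_L_eq)
qed

lemma gadget_R_H_partition: "H_partition (gadget_V m) (gadget_E m) (Suc m) (gadget_R m)"
proof -
  have "H_partition (gadget_V m) (gadget_E m) (Suc m) ((\<lambda>a. (\<lambda>j. (j, a)) ` {0..m}) ` {0..m})"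
    by (rule H_partition_of_lines) (auto simp: gadget_V_def gadget_E_def inj_on_def)
  moreover have "(\<lambda>j. (j, b)) ` A = A \<times> {b}" for b :: nat and A :: "nat set" by auto
  ultimately show ?thesis by (simp add: gadget_R_eq)
qed

lemma gadget_row_meets_column: "A \<in> gadget_L m \<Longrightarrow> B \<in> gadget_R m \<Longrightarrow> A \<inter> B \<noteq> {}"
  by (auto simp: gadget_L_eq gadget_R_eq)

lemma gadget_L_R_disjoint:
  assumes "m > 0"
  shows "gadget_L m \<inter> gadget_R m = {}"
proof -
  have "{a} \<times> {0..m} \<noteq> {0..m} \<times> {b}" for a b
  proof
    assume eq: "{a} \<times> {0..m} = {0..m} \<times> {b}"
    have "(a, 0) \<in> {a} \<times> {0..m}" "(a, 1) \<in> {a} \<times> {0..m}"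
      using assms by auto
    then have "(a, 0) \<in> {0..m} \<times> {b}" "(a, 1) \<in> {0..m} \<times> {b}"
      unfolding eq .
    then show False by simp
  qed
  then show ?thesis by (auto simp: gadget_L_eq gadget_R_eq)
qed

lemma gadget_min_H_partition_cases:
  assumes "m > 0" and H: "H_partition (gadget_V m) (gadget_E m) (Suc m) \<pi>"
  shows "\<pi> = gadget_L m \<or> \<pi> = gadget_R m"
proof -
  have part: "partition_on (gadget_V m) \<pi>" using H by (simp add: H_partition_def)
  have "\<pi> \<subseteq> gadget_L m \<or> \<pi> \<subseteq> gadget_R m"
  proof (rule ccontr)
    assume "\<not> ?thesis"
    then obtain A B where "A \<in> \<pi>" "A \<in> gadget_L m" "B \<in> \<pi>" "B \<in> gadget_R m"
      using gadget_min_H_partition_blocks_are_lines[OF H] by blast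
    moreover from this have "A \<noteq> B" using gadget_L_R_disjoint[OF assms(1)] by blast
    ultimately show False
      using gadget_row_meets_column disjointD[OF partition_onD2[OF part]] by blast
  qed
  then show ?thesis
    using partition_on_subset_eq[OF part] gadget_L_H_partition gadget_R_H_partition
    by (auto simp: H_partition_def)
qed

theorem lemma5p4:
  fixes m :: nat
  assumes "m > 0"
  shows "(\<forall>\<pi>. H_star_partition (gadget_V m) (gadget_E m) \<pi> \<longrightarrow> card \<pi> \<ge> m + 1)
       \<and> {\<pi>. H_partition (gadget_V m) (gadget_E m) (m + 1) \<pi>} = {gadget_L m, gadget_R m}
       \<and> gadget_L m \<noteq> gadget_R m"
proof (intro conjI allI impI)
  fix \<pi> assume "H_star_partition (gadget_V m) (gadget_E m) \<pi>"
  then show "card \<pi> \<ge> m + 1"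
    using gadget_H_partition_card_ge by (auto simp: H_star_partition_def)
next
  show "{\<pi>. H_partition (gadget_V m) (gadget_E m) (m + 1) \<pi>} = {gadget_L m, gadget_R m}"
    using gadget_min_H_partition_cases[OF assms] gadget_L_H_partition gadget_R_H_partition
    by auto
next
  have "gadget_L m \<noteq> {}" by (simp add: gadget_L_eq)
  then show "gadget_L m \<noteq> gadget_R m" using gadget_L_R_disjoint[OF assms] by auto
qed

end
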